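(* Let $P$ be a finite poset with $n$ elements and $k\ge 0$. Then there is a bijection between $\mathrm{Lin}^{+k}(P)$ and the set of triples $(T,\bar t,\bar p)$ where $T\in\mathrm{Lin}(P)$, $\bar t=(t_1,\dots,t_k)$ is a sequence of integers with $0<t_1\le\cdots\le t_k\le n$, and $\bar p=(p_1,\dots,p_k)\in P^k$ with $p_i$ a maximal element of $T^{-1}(\{1,\dots,t_i\})$ for every $i$.
   Context: $\mathrm{Lin}(P)$ is the set of linear extensions of $P$: bijections $T:P\to[n]$ with $T(p)<T(q)$ whenever $p<q$. $\mathrm{Lin}^{+k}(P)$ is the set of set-valued linear extensions with values in $[n+k]$: maps $S$ from $P$ to subsets of $[n+k]$ such that each $S(p)$ is nonempty, the sets $S(p)$ are pairwise disjoint with union $[n+k]$, and $\max S(p)<\min S(q)$ whenever $p<q$. *)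

theory Defs
  imports "HOL-Library.FuncSet"
begin

text \<open>A finite poset is a finite carrier set P with a partial order r (library notion
  partial_order_on P r, so r is a reflexive relation on P).  Strict order: p < q.\<close>

definition pstrict :: "('a \<times> 'a) set \<Rightarrow> 'a \<Rightarrow> 'a \<Rightarrow> bool" where
  "pstrict r p q \<longleftrightarrow> (p, q) \<in> r \<and> p \<noteq> q"

definition Lin :: "'a set \<Rightarrow> ('a \<times> 'a) set \<Rightarrow> ('a \<Rightarrow> nat) set" where
  "Lin P r = {T. T \<in> P \<rightarrow>\<^sub>E {1..card P} \<and> bij_betw T P {1..card P} \<and>
      (\<forall>p\<in>P. \<forall>q\<in>P. pstrict r p q \<longrightarrow> T p < T q)}"

definition LinPlus :: "'a set \<Rightarrow> ('a \<times> 'a) set \<Rightarrow> nat \<Rightarrow> ('a \<Rightarrow> nat set) set" where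
  "LinPlus P r k = {S. S \<in> P \<rightarrow>\<^sub>E Pow {1..card P + k} \<and>
      (\<forall>p\<in>P. S p \<noteq> {}) \<and>
      (\<forall>p\<in>P. \<forall>q\<in>P. p \<noteq> q \<longrightarrow> S p \<inter> S q = {}) \<and>
      (\<Union>p\<in>P. S p) = {1..card P + k} \<and>
      (\<forall>p\<in>P. \<forall>q\<in>P. pstrict r p q \<longrightarrow> Max (S p) < Min (S q))}"

definition is_maximal_in :: "('a \<times> 'a) set \<Rightarrow> 'a set \<Rightarrow> 'a \<Rightarrow> bool" where
  "is_maximal_in r A p \<longleftrightarrow> p \<in> A \<and> (\<forall>q\<in>A. \<not> pstrict r p q)"

definition Triples :: "'a set \<Rightarrow> ('a \<times> 'a) set \<Rightarrow> nat \<Rightarrow>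
    (('a \<Rightarrow> nat) \<times> nat list \<times> 'a list) set" where
  "Triples P r k = {(T, ts, ps). T \<in> Lin P r \<and>
      length ts = k \<and> sorted ts \<and> (\<forall>i<k. 0 < ts ! i \<and> ts ! i \<le> card P) \<and>
      length ps = k \<and>
      (\<forall>i<k. ps ! i \<in> P \<and> is_maximal_in r {q \<in> P. T q \<in> {1..ts ! i}} (ps ! i))}"

end

theory Submission
  imports Defs
begin

text \<open>A set-valued linear extension \<open>S\<close> is the same as a word \<open>w\<close> of length
  \<open>n + k\<close> using every element of \<open>P\<close>, in which all occurrences of \<open>p\<close> precede all
  occurrences of \<open>q\<close> whenever \<open>p < q\<close>: the \<open>j\<close>-th letter is the element whose set contains
  \<open>j\<close>. Read such a word from left to right. First occurrences form a linear extension \<open>T\<close>;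
  every repeated letter \<open>p\<close> is recorded as a marker \<open>(t, p)\<close>, where \<open>t\<close> is the number of
  distinct letters read so far. The markers come with nondecreasing \<open>t\<close>, \<open>p\<close> lies among the
  first \<open>t\<close> letters of \<open>T\<close>, and the order condition on the word says precisely that \<open>p\<close>
  is maximal among them. Conversely the word is rebuilt by inserting each marker letter right
  after the \<open>t\<close>-th first occurrence.\<close>

section \<open>Set-valued extensions as words\<close>

definition order_compatible :: "('a \<times> 'a) set \<Rightarrow> 'a list \<Rightarrow> bool" where
  "order_compatible r w \<longleftrightarrow> (\<forall>i<length w. \<forall>j<length w. pstrict r (w ! i) (w ! j) \<longrightarrow> i < j)"

lemma order_compatible_nth:
  "order_compatible r w \<Longrightarrow> i < length w \<Longrightarrow> j < length w \<Longrightarrow> pstrict r (w ! i) (w ! j) \<Longrightarrow> i < j"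
  by (simp add: order_compatible_def)

lemma order_compatible_snoc:
  "order_compatible r (w @ [x]) \<longleftrightarrow> order_compatible r w \<and> (\<forall>y\<in>set w. \<not> pstrict r x y)"
  unfolding order_compatible_def
  by (auto simp: nth_append in_set_conv_nth pstrict_def less_Suc_eq not_less_eq) (meson nth_mem)

definition compatible_words :: "'a set \<Rightarrow> ('a \<times> 'a) set \<Rightarrow> nat \<Rightarrow> 'a list set" where
  "compatible_words P r k = {w. set w = P \<and> length w = card P + k \<and> order_compatible r w}"

definition word_of_setval :: "'a set \<Rightarrow> nat \<Rightarrow> ('a \<Rightarrow> nat set) \<Rightarrow> 'a list" where
  "word_of_setval P k S = map (\<lambda>j. THE p. p \<in> P \<and> j \<in> S p) [1..<card P + k + 1]"

definition setval_of_word :: "'a list \<Rightarrow> 'a \<Rightarrow> nat set" where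
  "setval_of_word w = (\<lambda>p\<in>set w. {j \<in> {1..length w}. w ! (j - 1) = p})"

lemma length_word_of_setval [simp]: "length (word_of_setval P k S) = card P + k"
  by (simp add: word_of_setval_def del: upt_Suc)

lemma word_of_setval_nth:
  "i < card P + k \<Longrightarrow> word_of_setval P k S ! i = (THE p. p \<in> P \<and> Suc i \<in> S p)"
  by (simp add: word_of_setval_def del: upt_Suc)

lemma word_of_setval_nth_eq:
  assumes S: "S \<in> LinPlus P r k" and "p \<in> P" "j \<in> S p"
  shows "word_of_setval P k S ! (j - 1) = p"
proof -
  have "j \<in> {1..card P + k}"
    using S assms(2,3) by (auto simp: LinPlus_def)
  moreover have "(THE q. q \<in> P \<and> j \<in> S q) = p"
    using S assms(2,3) unfolding LinPlus_def by (intro the_equality) blast+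
  ultimately show ?thesis
    using word_of_setval_nth[of "j - 1" P k S] by fastforce
qed

lemma word_of_setval_nth_mem:
  assumes S: "S \<in> LinPlus P r k" and i: "i < card P + k"
  shows "word_of_setval P k S ! i \<in> P \<and> Suc i \<in> S (word_of_setval P k S ! i)"
proof -
  have "Suc i \<in> (\<Union>p\<in>P. S p)"
    using S i by (simp add: LinPlus_def)
  then obtain p where "p \<in> P" "Suc i \<in> S p"
    by blast
  then show ?thesis
    using word_of_setval_nth_eq[OF S, of p "Suc i"] by simp
qed

lemma word_of_setval_in_compatible_words:
  assumes S: "S \<in> LinPlus P r k"
  shows "word_of_setval P k S \<in> compatible_words P r k"
proof -
  let ?w = "word_of_setval P k S"
  have "set ?w \<subseteq> P"
    using word_of_setval_nth_mem[OF S] by (auto simp: in_set_conv_nth)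
  moreover have "P \<subseteq> set ?w"
  proof
    fix p assume p: "p \<in> P"
    have "S p \<noteq> {}"
      using S p by (simp add: LinPlus_def)
    then obtain j where j: "j \<in> S p"
      by blast
    then have "j \<in> {1..card P + k}"
      using S p by (auto simp: LinPlus_def)
    then have "j - 1 < card P + k"
      by auto
    then show "p \<in> set ?w"
      using word_of_setval_nth_eq[OF S p j] by (metis length_word_of_setval nth_mem)
  qed
  moreover have "order_compatible r ?w"
    unfolding order_compatible_def
  proof (intro allI impI)
    fix i j assume i: "i < length ?w" and j: "j < length ?w" and less: "pstrict r (?w ! i) (?w ! j)"
    have mem: "?w ! i \<in> P" "Suc i \<in> S (?w ! i)" "?w ! j \<in> P" "Suc j \<in> S (?w ! j)"
      using word_of_setval_nth_mem[OF S] i j by auto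
    have fin: "finite (S (?w ! i))" "finite (S (?w ! j))"
      using S mem by (auto simp: LinPlus_def intro: finite_subset)
    have "Suc i \<le> Max (S (?w ! i))" "Min (S (?w ! j)) \<le> Suc j"
      using mem fin by simp_all
    moreover have "Max (S (?w ! i)) < Min (S (?w ! j))"
      using S mem less by (simp add: LinPlus_def)
    ultimately show "i < j"
      by simp
  qed
  ultimately show ?thesis
    by (simp add: compatible_words_def)
qed

lemma setval_of_word_in_LinPlus:
  assumes w: "w \<in> compatible_words P r k"
  shows "setval_of_word w \<in> LinPlus P r k"
proof -
  let ?S = "setval_of_word w"
  have set_w: "set w = P" and len: "length w = card P + k" and ord: "order_compatible r w"
    using w by (auto simp: compatible_words_def)
  have S: "?S p = {j \<in> {1..card P + k}. w ! (j - 1) = p}" if "p \<in> P" for p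
    using that set_w len by (simp add: setval_of_word_def)
  have nonempty: "?S p \<noteq> {}" if p: "p \<in> P" for p
  proof -
    obtain i where "i < length w" "w ! i = p"
      using p set_w by (auto simp: in_set_conv_nth)
    then have "Suc i \<in> ?S p"
      using S[OF p] len by simp
    then show ?thesis
      by blast
  qed
  have cover: "(\<Union>p\<in>P. ?S p) = {1..card P + k}"
  proof (intro equalityI subsetI)
    fix j assume j: "j \<in> {1..card P + k}"
    then have "w ! (j - 1) \<in> P"
      using set_w len by auto
    then show "j \<in> (\<Union>p\<in>P. ?S p)"
      using S j by blast
  qed (use S in auto)
  have "Max (?S p) < Min (?S q)" if p: "p \<in> P" and q: "q \<in> P" and less: "pstrict r p q"
    for p q
  proof -
    have "finite (?S p)" "finite (?S q)"
      using p q by (simp_all add: S)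
    then have "Max (?S p) \<in> ?S p" "Min (?S q) \<in> ?S q"
      using nonempty p q by simp_all
    then have "Max (?S p) \<in> {1..length w}" "w ! (Max (?S p) - 1) = p"
      and "Min (?S q) \<in> {1..length w}" "w ! (Min (?S q) - 1) = q"
      using S p q len by auto
    then have "Max (?S p) - 1 < Min (?S q) - 1"
      using order_compatible_nth[OF ord, of "Max (?S p) - 1" "Min (?S q) - 1"] less by auto
    then show ?thesis
      by simp
  qed
  moreover have "?S \<in> P \<rightarrow>\<^sub>E Pow {1..card P + k}"
    using S set_w len by (auto simp: setval_of_word_def)
  ultimately show ?thesis
    using nonempty cover S unfolding LinPlus_def by auto
qed

lemma setval_of_word_of_setval:
  assumes S: "S \<in> LinPlus P r k"
  shows "setval_of_word (word_of_setval P k S) = S"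
proof (rule extensionalityI)
  let ?w = "word_of_setval P k S"
  have set_w: "set ?w = P"
    using word_of_setval_in_compatible_words[OF S] by (simp add: compatible_words_def)
  show "setval_of_word ?w \<in> extensional P" "S \<in> extensional P"
    using S set_w by (auto simp: setval_of_word_def LinPlus_def PiE_def)
  fix p assume p: "p \<in> P"
  have range: "S p \<subseteq> {1..card P + k}"
    using S p by (auto simp: LinPlus_def)
  have "j \<in> S p \<longleftrightarrow> ?w ! (j - 1) = p" if "j \<in> {1..card P + k}" for j
    using word_of_setval_nth_mem[OF S, of "j - 1"] word_of_setval_nth_eq[OF S p, of j] that by auto
  then show "setval_of_word ?w p = S p"
    using p set_w range by (auto simp: setval_of_word_def)
qed

lemma word_of_setval_of_word:
  assumes w: "w \<in> compatible_words P r k"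
  shows "word_of_setval P k (setval_of_word w) = w"
proof (rule nth_equalityI)
  have set_w: "set w = P" and len: "length w = card P + k"
    using w by (auto simp: compatible_words_def)
  then show "length (word_of_setval P k (setval_of_word w)) = length w"
    by simp
  fix i assume "i < length (word_of_setval P k (setval_of_word w))"
  then have i: "i < length w"
    using len by simp
  then have "Suc i \<in> setval_of_word w (w ! i)" "w ! i \<in> P"
    using set_w by (auto simp: setval_of_word_def)
  then show "word_of_setval P k (setval_of_word w) ! i = w ! i"
    using word_of_setval_nth_eq[OF setval_of_word_in_LinPlus[OF w]] by fastforce
qed

lemma bij_betw_word_of_setval:
  "bij_betw (word_of_setval P k) (LinPlus P r k) (compatible_words P r k)"
proof (rule bij_betw_byWitness[where f' = setval_of_word])
  show "\<forall>S\<in>LinPlus P r k. setval_of_word (word_of_setval P k S) = S"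
    using setval_of_word_of_setval by blast
  show "\<forall>w\<in>compatible_words P r k. word_of_setval P k (setval_of_word w) = w"
    using word_of_setval_of_word by blast
  show "word_of_setval P k ` LinPlus P r k \<subseteq> compatible_words P r k"
    using word_of_setval_in_compatible_words by blast
  show "setval_of_word ` compatible_words P r k \<subseteq> LinPlus P r k"
    using setval_of_word_in_LinPlus by blast
qed

section \<open>First occurrences and repetitions in a word\<close>

definition decompose_step :: "'a list \<times> nat list \<times> 'a list \<Rightarrow> 'a \<Rightarrow> 'a list \<times> nat list \<times> 'a list" where
  "decompose_step = (\<lambda>(L, ts, ps) x.
     if x \<in> set L then (L, ts @ [length L], ps @ [x]) else (L @ [x], ts, ps))"

definition decompose :: "'a list \<Rightarrow> 'a list \<times> nat list \<times> 'a list" where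
  "decompose w = foldl decompose_step ([], [], []) w"

lemma decompose_Nil [simp]: "decompose [] = ([], [], [])"
  by (simp add: decompose_def)

lemma decompose_snoc_repeat:
  "decompose w = (L, ts, ps) \<Longrightarrow> x \<in> set L \<Longrightarrow> decompose (w @ [x]) = (L, ts @ [length L], ps @ [x])"
  by (simp add: decompose_def decompose_step_def)

lemma decompose_snoc_new:
  "decompose w = (L, ts, ps) \<Longrightarrow> x \<notin> set L \<Longrightarrow> decompose (w @ [x]) = (L @ [x], ts, ps)"
  by (simp add: decompose_def decompose_step_def)

definition wf_decomposition :: "'a list \<Rightarrow> nat list \<Rightarrow> 'a list \<Rightarrow> bool" where
  "wf_decomposition L ts ps \<longleftrightarrow> distinct L \<and> length ts = length ps \<and> sorted ts \<and>
     (\<forall>i<length ts. 0 < ts ! i \<and> ts ! i \<le> length L \<and> ps ! i \<in> set (take (ts ! i) L))"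

lemma wf_decomposition_Nil [simp]: "wf_decomposition [] ts ps \<longleftrightarrow> ts = [] \<and> ps = []"
  by (auto simp: wf_decomposition_def) (metis length_greater_0_conv not_less0)+

lemma wf_decomposition_snoc_repeat:
  "wf_decomposition L (ts @ [length L]) (ps @ [x]) \<longleftrightarrow> wf_decomposition L ts ps \<and> x \<in> set L"
  by (fastforce simp: wf_decomposition_def sorted_append nth_append in_set_conv_nth less_Suc_eq
      dest: in_set_takeD)

lemma wf_decomposition_snoc_new:
  assumes "\<forall>t\<in>set ts. t \<le> length L"
  shows "wf_decomposition (L @ [x]) ts ps \<longleftrightarrow> wf_decomposition L ts ps \<and> x \<notin> set L"
  using assms by (auto simp: wf_decomposition_def) (metis nth_mem le_SucI)

lemma decompose_wf:
  "decompose w = (L, ts, ps) \<Longrightarrow>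
     wf_decomposition L ts ps \<and> set L = set w \<and> length L + length ts = length w"
proof (induction w arbitrary: L ts ps rule: rev_induct)
  case Nil
  then show ?case by simp
next
  case (snoc x w)
  obtain L0 ts0 ps0 where dec: "decompose w = (L0, ts0, ps0)" by (cases "decompose w") auto
  note IH = snoc.IH[OF dec]
  show ?case
  proof (cases "x \<in> set L0")
    case True
    have "L = L0" "ts = ts0 @ [length L0]" "ps = ps0 @ [x]"
      using snoc.prems decompose_snoc_repeat[OF dec True] by auto
    then show ?thesis
      using IH True by (simp add: wf_decomposition_snoc_repeat insert_absorb)
  next
    case False
    have "\<forall>t\<in>set ts0. t \<le> length L0"
      using IH unfolding wf_decomposition_def by (metis in_set_conv_nth)
    then have "wf_decomposition (L0 @ [x]) ts0 ps0"
      using IH False by (simp add: wf_decomposition_snoc_new)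
    moreover have "L = L0 @ [x]" "ts = ts0" "ps = ps0"
      using snoc.prems decompose_snoc_new[OF dec False] by auto
    ultimately show ?thesis
      using IH by simp
  qed
qed

lemma inj_decompose: "inj decompose"
proof (rule injI)
  fix w w' :: "'a list"
  assume "decompose w = decompose w'"
  then show "w = w'"
  proof (induction w arbitrary: w' rule: rev_induct)
    case Nil
    then show ?case
      using decompose_wf[of w'] by (cases "decompose w'") auto
  next
    case (snoc x w)
    then obtain u y where u: "w' = u @ [y]"
      using decompose_wf[of "w @ [x]"] by (cases w' rule: rev_exhaust) auto
    obtain L0 ts0 ps0 where dec0: "decompose w = (L0, ts0, ps0)" by (cases "decompose w") auto
    obtain L1 ts1 ps1 where dec1: "decompose u = (L1, ts1, ps1)" by (cases "decompose u") auto
    have wf: "wf_decomposition L0 ts0 ps0" "wf_decomposition L1 ts1 ps1"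
      using decompose_wf[OF dec0] decompose_wf[OF dec1] by auto
    txt \<open>A repetition cannot match a new letter: its marker would exceed the length of the
      shorter list of first occurrences.\<close>
    have no_mixed: False
      if "decompose w = (L0, ts0, ps0)" "decompose u = (L1, ts1, ps1)"
         "wf_decomposition L1 ts1 ps1" "x \<in> set L0" "y \<notin> set L1"
         "decompose (w @ [x]) = decompose (u @ [y])"
      for w u :: "'a list" and x y L0 L1 ts0 ts1 ps0 ps1
    proof -
      from that have "L0 = L1 @ [y]" "ts1 = ts0 @ [length L0]"
        by (auto simp: decompose_snoc_repeat decompose_snoc_new)
      then show False
        using \<open>wf_decomposition L1 ts1 ps1\<close> by (auto simp: wf_decomposition_def)
    qed
    show ?case
    proof (cases "x \<in> set L0"; cases "y \<in> set L1")
      assume "x \<in> set L0" "y \<in> set L1"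
      then have "decompose w = decompose u \<and> x = y"
        using snoc.prems u dec0 dec1 by (simp add: decompose_snoc_repeat)
      then show ?thesis
        using snoc.IH u by blast
    next
      assume "x \<notin> set L0" "y \<notin> set L1"
      then have "decompose w = decompose u \<and> x = y"
        using snoc.prems u dec0 dec1 by (simp add: decompose_snoc_new)
      then show ?thesis
        using snoc.IH u by blast
    next
      assume "x \<in> set L0" "y \<notin> set L1"
      then show ?thesis
        using no_mixed[OF dec0 dec1 wf(2)] snoc.prems u by blast
    next
      assume "x \<notin> set L0" "y \<in> set L1"
      moreover have "decompose (u @ [y]) = decompose (w @ [x])"
        using snoc.prems u by simp
      ultimately show ?thesis
        using no_mixed[OF dec1 dec0 wf(1)] by blast
    qed
  qed
qed

lemma decompose_surj:
  "wf_decomposition L ts ps \<Longrightarrow> \<exists>w. decompose w = (L, ts, ps)"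
proof (induction "length L + length ts" arbitrary: L ts ps rule: less_induct)
  case less
  have len: "length ps = length ts"
    using less.prems by (simp add: wf_decomposition_def)
  consider (repeat) ts0 ps0 x where "ts = ts0 @ [length L]" "ps = ps0 @ [x]"
    | (new) L0 x where "L = L0 @ [x]" "\<forall>t\<in>set ts. t \<le> length L0"
    | (empty) "L = []"
  proof (cases "ts \<noteq> [] \<and> last ts = length L")
    case True
    show ?thesis
    proof (rule that(1))
      show "ts = butlast ts @ [length L]"
        using True by (metis append_butlast_last_id)
      show "ps = butlast ps @ [last ps]"
        using True len by (cases ps rule: rev_exhaust) auto
    qed
  next
    case last_small: False
    show ?thesis
    proof (cases L rule: rev_exhaust)
      case (snoc L0 x)
      have "t \<le> length L0" if t: "t \<in> set ts" for t
      proof -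
        have ts: "ts \<noteq> []" "sorted ts"
          using t less.prems unfolding wf_decomposition_def by auto
        obtain i where i: "i < length ts" "t = ts ! i"
          using t by (auto simp: in_set_conv_nth)
        have "t \<le> ts ! (length ts - 1)"
          using sorted_nth_mono[OF ts(2), of i "length ts - 1"] i by simp
        moreover have "length ts - 1 < length ts"
          using ts(1) by simp
        then have "ts ! (length ts - 1) \<le> length L"
          using less.prems unfolding wf_decomposition_def by blast
        moreover have "ts ! (length ts - 1) \<noteq> length L"
          using ts(1) last_small last_conv_nth[OF ts(1)] by simp
        ultimately show ?thesis
          using snoc by simp
      qed
      then show ?thesis
        using snoc that(2) by blast
    qed (rule that(3))
  qed
  then show ?case
  proof cases
    case repeat
    then have wf: "wf_decomposition L ts0 ps0" and x: "x \<in> set L"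
      using less.prems by (simp_all add: wf_decomposition_snoc_repeat)
    obtain w where "decompose w = (L, ts0, ps0)"
      using less.hyps[of L ts0 ps0] wf repeat by auto
    then have "decompose (w @ [x]) = (L, ts, ps)"
      using repeat x by (simp add: decompose_snoc_repeat)
    then show ?thesis ..
  next
    case new
    then have wf: "wf_decomposition L0 ts ps" and x: "x \<notin> set L0"
      using less.prems by (simp_all add: wf_decomposition_snoc_new)
    obtain w where "decompose w = (L0, ts, ps)"
      using less.hyps[of L0 ts ps] wf new by auto
    then have "decompose (w @ [x]) = (L, ts, ps)"
      using new x by (simp add: decompose_snoc_new)
    then show ?thesis ..
  next
    case empty
    then show ?thesis
      using less.prems by (intro exI[of _ "[]"]) simp
  qed
qed

definition markers_maximal :: "('a \<times> 'a) set \<Rightarrow> 'a list \<Rightarrow> nat list \<Rightarrow> 'a list \<Rightarrow> bool" where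
  "markers_maximal r L ts ps \<longleftrightarrow>
     (\<forall>i<length ts. \<forall>q\<in>set (take (ts ! i) L). \<not> pstrict r (ps ! i) q)"

lemma markers_maximal_snoc_repeat:
  assumes "length ps = length ts"
  shows "markers_maximal r L (ts @ [length L]) (ps @ [x]) \<longleftrightarrow>
    markers_maximal r L ts ps \<and> (\<forall>q\<in>set L. \<not> pstrict r x q)"
  using assms by (auto simp: markers_maximal_def nth_append less_Suc_eq)

lemma markers_maximal_snoc_new:
  assumes "\<forall>t\<in>set ts. t \<le> length L"
  shows "markers_maximal r (L @ [x]) ts ps \<longleftrightarrow> markers_maximal r L ts ps"
  using assms by (simp add: markers_maximal_def)

lemma order_compatible_decompose:
  "decompose w = (L, ts, ps) \<Longrightarrow>
     order_compatible r w \<longleftrightarrow> order_compatible r L \<and> markers_maximal r L ts ps"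
proof (induction w arbitrary: L ts ps rule: rev_induct)
  case Nil
  then show ?case by (simp add: order_compatible_def markers_maximal_def)
next
  case (snoc x w)
  obtain L0 ts0 ps0 where dec: "decompose w = (L0, ts0, ps0)" by (cases "decompose w") auto
  note IH = snoc.IH[OF dec]
  have wf: "wf_decomposition L0 ts0 ps0" and set_L0: "set L0 = set w"
    using decompose_wf[OF dec] by auto
  show ?case
  proof (cases "x \<in> set L0")
    case True
    have "L = L0" "ts = ts0 @ [length L0]" "ps = ps0 @ [x]"
      using snoc.prems decompose_snoc_repeat[OF dec True] by auto
    moreover have "length ps0 = length ts0"
      using wf by (simp add: wf_decomposition_def)
    ultimately show ?thesis
      using IH set_L0 by (simp add: order_compatible_snoc markers_maximal_snoc_repeat)
  next
    case False
    have "\<forall>t\<in>set ts0. t \<le> length L0"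
      using wf unfolding wf_decomposition_def by (auto simp: in_set_conv_nth)
    moreover have "L = L0 @ [x]" "ts = ts0" "ps = ps0"
      using snoc.prems decompose_snoc_new[OF dec False] by auto
    ultimately show ?thesis
      using IH set_L0 by (auto simp: order_compatible_snoc markers_maximal_snoc_new)
  qed
qed

definition marked_extensions ::
    "'a set \<Rightarrow> ('a \<times> 'a) set \<Rightarrow> nat \<Rightarrow> ('a list \<times> nat list \<times> 'a list) set" where
  "marked_extensions P r k = {(L, ts, ps). wf_decomposition L ts ps \<and> set L = P \<and> length ts = k \<and>
     order_compatible r L \<and> markers_maximal r L ts ps}"

lemma decompose_in_marked_extensions:
  assumes "decompose w = (L, ts, ps)"
  shows "w \<in> compatible_words P r k \<longleftrightarrow> (L, ts, ps) \<in> marked_extensions P r k"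
proof -
  have wf: "wf_decomposition L ts ps" "set L = set w" "length L + length ts = length w"
    using decompose_wf[OF assms] by auto
  then have "length L = card (set w)"
    by (metis distinct_card wf_decomposition_def)
  then show ?thesis
    using wf order_compatible_decompose[OF assms, of r]
    by (auto simp: compatible_words_def marked_extensions_def)
qed

lemma bij_betw_decompose: "bij_betw decompose (compatible_words P r k) (marked_extensions P r k)"
proof (rule bij_betw_imageI)
  show "inj_on decompose (compatible_words P r k)"
    using inj_decompose by (rule inj_on_subset) simp
  show "decompose ` compatible_words P r k = marked_extensions P r k"
  proof (intro equalityI subsetI)
    fix y assume "y \<in> decompose ` compatible_words P r k"
    then show "y \<in> marked_extensions P r k"
      using decompose_in_marked_extensions by (metis image_iff prod_cases3)
  next
    fix y assume y: "y \<in> marked_extensions P r k"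
    then obtain L ts ps where "y = (L, ts, ps)" "wf_decomposition L ts ps"
      by (auto simp: marked_extensions_def)
    then obtain w where "decompose w = y"
      using decompose_surj by blast
    then show "y \<in> decompose ` compatible_words P r k"
      using y decompose_in_marked_extensions by (metis image_eqI prod_cases3)
  qed
qed

section \<open>Rankings\<close>

definition ranking :: "'a list \<Rightarrow> 'a \<Rightarrow> nat" where
  "ranking L = (\<lambda>p\<in>set L. Suc (THE i. i < length L \<and> L ! i = p))"

lemma ranking_nth:
  assumes "distinct L" "i < length L"
  shows "ranking L (L ! i) = Suc i"
proof -
  have "(THE j. j < length L \<and> L ! j = L ! i) = i"
    using assms by (auto simp: nth_eq_iff_index_eq)
  then show ?thesis
    using assms by (simp add: ranking_def)
qed

lemma bij_betw_ranking:
  assumes "distinct L"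
  shows "bij_betw (ranking L) (set L) {1..length L}"
proof (rule bij_betw_byWitness[where f' = "\<lambda>j. L ! (j - 1)"])
  show "\<forall>p\<in>set L. L ! (ranking L p - 1) = p"
    using assms by (auto simp: in_set_conv_nth ranking_nth)
  show "\<forall>j\<in>{1..length L}. ranking L (L ! (j - 1)) = j"
    using assms by (auto simp: ranking_nth)
  show "ranking L ` set L \<subseteq> {1..length L}"
    using assms by (auto simp: in_set_conv_nth ranking_nth)
  show "(\<lambda>j. L ! (j - 1)) ` {1..length L} \<subseteq> set L"
    by auto
qed

lemma ranking_in_Lin:
  assumes "distinct L" "set L = P"
  shows "ranking L \<in> Lin P r \<longleftrightarrow> order_compatible r L"
proof -
  have card: "card P = length L"
    using assms distinct_card by blast
  have bij: "bij_betw (ranking L) P {1..card P}"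
    using bij_betw_ranking[OF assms(1)] assms card by simp
  then have "ranking L \<in> P \<rightarrow>\<^sub>E {1..card P}"
    using assms(2) by (auto simp: ranking_def bij_betw_def)
  moreover have "(\<forall>p\<in>P. \<forall>q\<in>P. pstrict r p q \<longrightarrow> ranking L p < ranking L q) \<longleftrightarrow>
      order_compatible r L"
    unfolding order_compatible_def assms(2)[symmetric] all_set_conv_all_nth
    using ranking_nth[OF assms(1)] by auto
  ultimately show ?thesis
    using bij by (simp add: Lin_def)
qed

lemma ranking_prefix:
  assumes "distinct L"
  shows "{q \<in> set L. ranking L q \<in> {1..t}} = set (take t L)"
proof (intro equalityI subsetI)
  fix q assume "q \<in> {q \<in> set L. ranking L q \<in> {1..t}}"
  then obtain i where "i < length L" "q = L ! i" "Suc i \<le> t"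
    using assms by (auto simp: in_set_conv_nth ranking_nth)
  then show "q \<in> set (take t L)"
    by (auto simp: in_set_conv_nth)
next
  fix q assume "q \<in> set (take t L)"
  then obtain i where "i < length L" "q = L ! i" "i < t"
    by (auto simp: in_set_conv_nth)
  then show "q \<in> {q \<in> set L. ranking L q \<in> {1..t}}"
    using assms by (simp add: ranking_nth)
qed

definition list_of_ranking :: "'a set \<Rightarrow> ('a \<Rightarrow> nat) \<Rightarrow> 'a list" where
  "list_of_ranking P T = map (inv_into P T) [1..<card P + 1]"

lemma list_of_ranking_ranking:
  assumes "distinct L"
  shows "list_of_ranking (set L) (ranking L) = L"
proof (rule nth_equalityI)
  have card: "card (set L) = length L"
    using assms by (rule distinct_card)
  then show "length (list_of_ranking (set L) (ranking L)) = length L"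
    by (simp add: list_of_ranking_def del: upt_Suc)
  fix i assume "i < length (list_of_ranking (set L) (ranking L))"
  then have i: "i < length L"
    using card by (simp add: list_of_ranking_def del: upt_Suc)
  have "inv_into (set L) (ranking L) (ranking L (L ! i)) = L ! i"
    using bij_betw_ranking[OF assms] i by (simp add: bij_betw_def inv_into_f_f)
  then show "list_of_ranking (set L) (ranking L) ! i = L ! i"
    using i card by (simp add: list_of_ranking_def ranking_nth[OF assms] del: upt_Suc)
qed

lemma ranking_list_of_ranking:
  assumes T: "T \<in> P \<rightarrow>\<^sub>E {1..card P}" and bij: "bij_betw T P {1..card P}"
  shows "distinct (list_of_ranking P T)" "set (list_of_ranking P T) = P"
    "ranking (list_of_ranking P T) = T"
proof -
  let ?L = "list_of_ranking P T"
  have inv_bij: "bij_betw (inv_into P T) {1..card P} P"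
    using bij by (rule bij_betw_inv_into)
  show dist: "distinct ?L"
    using inv_bij by (simp add: list_of_ranking_def distinct_map bij_betw_def
        atLeastLessThanSuc_atLeastAtMost del: upt_Suc)
  show set: "set ?L = P"
    using inv_bij by (simp add: list_of_ranking_def bij_betw_def
        atLeastLessThanSuc_atLeastAtMost del: upt_Suc)
  show "ranking ?L = T"
  proof (rule extensionalityI)
    show "ranking ?L \<in> extensional P" "T \<in> extensional P"
      using T set by (auto simp: ranking_def PiE_def)
    fix p assume p: "p \<in> P"
    then have "T p \<in> {1..card P}"
      using T by blast
    then obtain i where i: "i < card P" "T p = Suc i"
      by (cases "T p") auto
    moreover have "inv_into P T (T p) = p"
      using bij p by (simp add: bij_betw_def)
    ultimately have "?L ! i = p"
      by (simp add: list_of_ranking_def del: upt_Suc)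
    then show "ranking ?L p = T p"
      using ranking_nth[OF dist, of i] i by (simp add: list_of_ranking_def del: upt_Suc)
  qed
qed

lemma ranking_in_Triples:
  assumes "distinct L" "set L = P"
  shows "(ranking L, ts, ps) \<in> Triples P r k \<longleftrightarrow> (L, ts, ps) \<in> marked_extensions P r k"
proof -
  have "card P = length L"
    using assms distinct_card by blast
  moreover have "is_maximal_in r {q \<in> P. ranking L q \<in> {1..t}} p \<longleftrightarrow>
      p \<in> set (take t L) \<and> (\<forall>q\<in>set (take t L). \<not> pstrict r p q)" for t p
    using ranking_prefix[OF assms(1), of t] assms(2) by (simp add: is_maximal_in_def)
  ultimately show ?thesis
    using assms ranking_in_Lin[OF assms]
    unfolding Triples_def marked_extensions_def wf_decomposition_def markers_maximal_def
    by (auto dest: in_set_takeD)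
qed

lemma bij_betw_ranking_marked_extensions:
  "bij_betw (\<lambda>(L, ts, ps). (ranking L, ts, ps)) (marked_extensions P r k) (Triples P r k)"
proof (rule bij_betw_byWitness[where f' = "\<lambda>(T, ts, ps). (list_of_ranking P T, ts, ps)"])
  show "\<forall>x\<in>marked_extensions P r k.
      (\<lambda>(T, ts, ps). (list_of_ranking P T, ts, ps)) ((\<lambda>(L, ts, ps). (ranking L, ts, ps)) x) = x"
    by (auto simp: marked_extensions_def wf_decomposition_def list_of_ranking_ranking)
  show "\<forall>y\<in>Triples P r k.
      (\<lambda>(L, ts, ps). (ranking L, ts, ps)) ((\<lambda>(T, ts, ps). (list_of_ranking P T, ts, ps)) y) = y"
    by (auto simp: Triples_def Lin_def ranking_list_of_ranking)
  show "(\<lambda>(L, ts, ps). (ranking L, ts, ps)) ` marked_extensions P r k \<subseteq> Triples P r k"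
    using ranking_in_Triples by (fastforce simp: marked_extensions_def wf_decomposition_def)
  show "(\<lambda>(T, ts, ps). (list_of_ranking P T, ts, ps)) ` Triples P r k \<subseteq> marked_extensions P r k"
  proof clarify
    fix T ts ps assume y: "(T, ts, ps) \<in> Triples P r k"
    then have "T \<in> P \<rightarrow>\<^sub>E {1..card P}" "bij_betw T P {1..card P}"
      by (auto simp: Triples_def Lin_def)
    note L = ranking_list_of_ranking[OF this]
    show "(list_of_ranking P T, ts, ps) \<in> marked_extensions P r k"
      using ranking_in_Triples[OF L(1,2)] y L(3) by simp
  qed
qed

theorem proposition21:
  fixes P :: "'a set" and r :: "('a \<times> 'a) set" and k :: nat
  assumes "finite P" and "partial_order_on P r"
  shows "\<exists>f. bij_betw f (LinPlus P r k) (Triples P r k)"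
proof -
  have "bij_betw (word_of_setval P k) (LinPlus P r k) (compatible_words P r k)"
    by (rule bij_betw_word_of_setval)
  moreover have "bij_betw decompose (compatible_words P r k) (marked_extensions P r k)"
    by (rule bij_betw_decompose)
  moreover have "bij_betw (\<lambda>(L, ts, ps). (ranking L, ts, ps)) (marked_extensions P r k) (Triples P r k)"
    by (rule bij_betw_ranking_marked_extensions)
  ultimately show ?thesis
    by (meson bij_betw_trans)
qed

end
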